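(* The quasi-Euclidean metric tensor is conformal to the Euclidean metric tensor. Precisely: on $V_N\setminus\{0\}$ let $n^{rs}(t)=h^2r^{rs}+\frac14g^2\,t^rt^s/S(t)^2$, let $\xi(t)=\big[\tfrac12S(t)^2\big]^{(h-1)/2}$, and consider the map $t\mapsto\tilde t$, $\tilde t^p=\xi(t)\,t^p/h$, with Jacobian $k^p_q=\partial\tilde t^p/\partial t^q$. Then $$k^p_r\,k^q_s\,n^{rs}(t)=\xi(t)^2\,r^{pq}\qquad\text{for all }t\neq0 .$$
   Context: Let $N\ge2$; points of $V_N=\mathbb{R}^N$ are $t=(t^1,\dots,t^N)$; indices $p,q,r,s$ run over $1,\dots,N$, repeated indices summed. $(r_{pq})$ is a symmetric positive-definite matrix of the form $r_{NN}=1$, $r_{Na}=0$ ($a<N$), with inverse $(r^{pq})$, and $S(t)=\sqrt{r_{pq}t^pt^q}$. Fix $g\in(-2,2)$, $h=\sqrt{1-g^2/4}$. The quasi-Euclidean metric tensor is $n_{pq}(g;t)=\frac1{h^2}r_{pq}-\frac14\frac{g^2}{h^2}L_pL_q$ with $L_p=r_{pq}t^q/S(t)$; its inverse is $n^{rs}$ as given. *)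

theory Defs
  imports "HOL-Analysis.Analysis"
begin

text \<open>Vectors of V_N are real^'n (N = CARD('n)); the matrix (r_pq) is r, its inverse
  (r^pq) is matrix_inv r.\<close>

definition hval :: "real \<Rightarrow> real" where
  "hval g = sqrt (1 - g^2 / 4)"

definition Sfun :: "real^'n^'n \<Rightarrow> real^'n \<Rightarrow> real" where
  "Sfun r t = sqrt (t \<bullet> (r *v t))"

definition xi :: "real^'n^'n \<Rightarrow> real \<Rightarrow> real^'n \<Rightarrow> real" where
  "xi r g t = ((Sfun r t)^2 / 2) powr ((hval g - 1) / 2)"

definition nup :: "real^'n^'n \<Rightarrow> real \<Rightarrow> real^'n \<Rightarrow> real^'n^'n" where
  "nup r g t = (\<chi> p q. (hval g)^2 * (matrix_inv r $ p $ q)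
                       + g^2 / 4 * (t $ p * t $ q) / (Sfun r t)^2)"

definition qe_map :: "real^'n^'n \<Rightarrow> real \<Rightarrow> real^'n \<Rightarrow> real^'n" where
  "qe_map r g t = (xi r g t / hval g) *\<^sub>R t"

end

theory Submission
  imports Defs
begin

text \<open>Write \<open>u = r t\<close>, \<open>S\<^sup>2 = t \<bullet> u\<close>, \<open>A = r\<inverse>\<close> and \<open>P = t u\<^sup>T\<close>. Differentiating the radial map gives the
  Jacobian \<open>K = (\<xi>/h) (I + \<beta> P)\<close> with \<open>\<beta> = (h - 1)/S\<^sup>2\<close>, and the inverse metric is
  \<open>n = h\<^sup>2 A + \<gamma> t t\<^sup>T\<close> with \<open>\<gamma> = g\<^sup>2/(4 S\<^sup>2) = (1 - h\<^sup>2)/S\<^sup>2\<close>. Since \<open>A u = t\<close>, the congruence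
  \<open>(I + \<beta> P) n (I + \<beta> P)\<^sup>T\<close> stays in the span of \<open>A\<close> and \<open>t t\<^sup>T\<close>; its \<open>A\<close>-coefficient is
  \<open>h\<^sup>2\<close> and its \<open>t t\<^sup>T\<close>-coefficient \<open>h\<^sup>2\<beta>(2 + \<beta>S\<^sup>2) + \<gamma>(1 + \<beta>S\<^sup>2)\<^sup>2\<close> vanishes because
  \<open>1 + \<beta>S\<^sup>2 = h\<close>.\<close>

definition outer_prod :: "real^'n \<Rightarrow> real^'m \<Rightarrow> real^'m^'n" where
  "outer_prod x y = (\<chi> i j. x$i * y$j)"

lemma matrix_add_rdistrib: "((A::real^'m^'n) + B) ** C = A ** C + B ** C"
  by (simp add: matrix_matrix_mult_def vec_eq_iff sum.distrib algebra_simps)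

lemma transpose_add: "transpose ((A::real^'m^'n) + B) = transpose A + transpose B"
  by (simp add: transpose_def vec_eq_iff)

lemma transpose_outer_prod: "transpose (outer_prod x y) = outer_prod y x"
  by (simp add: outer_prod_def transpose_def vec_eq_iff mult_ac)

lemma outer_prod_matrix_mul: "outer_prod x y ** M = outer_prod x (y v* M)"
  by (simp add: outer_prod_def matrix_matrix_mult_def vector_matrix_mult_def vec_eq_iff
      sum_distrib_left mult_ac)

lemma matrix_mul_outer_prod: "M ** outer_prod x y = outer_prod (M *v x) y"
  by (simp add: outer_prod_def matrix_matrix_mult_def matrix_vector_mult_def vec_eq_iff
      sum_distrib_left mult_ac)

lemma vector_matrix_mul_outer_prod: "w v* outer_prod x y = (w \<bullet> x) *\<^sub>R y"
  by (simp add: outer_prod_def vector_matrix_mult_def vec_eq_iff inner_vec_def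
      sum_distrib_left mult_ac)

lemma outer_prod_matrix_vector_mul: "outer_prod x y *v w = (y \<bullet> w) *\<^sub>R x"
  by (simp add: outer_prod_def matrix_vector_mult_def vec_eq_iff inner_vec_def
      sum_distrib_left mult_ac)

lemma outer_prod_scaleR_left: "outer_prod (a *\<^sub>R x) y = a *\<^sub>R outer_prod x y"
  and outer_prod_scaleR_right: "outer_prod x (a *\<^sub>R y) = a *\<^sub>R outer_prod x y"
  by (simp_all add: outer_prod_def vec_eq_iff mult_ac)

lemma matrix_scaleR_plus_rank_one:
  "matrix (\<lambda>v. c *\<^sub>R v + (w \<bullet> v) *\<^sub>R x) = c *\<^sub>R mat 1 + outer_prod x w"
  by (simp add: matrix_def outer_prod_def mat_def vec_eq_iff inner_axis mult_ac)
    (simp add: axis_def)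

lemma rank_one_congruence:
  fixes A :: "real^'n^'n" and a \<beta> \<gamma> :: real
  assumes "A *v u = t" and "u v* A = t"
  defines "K \<equiv> mat 1 + \<beta> *\<^sub>R outer_prod t u"
  shows "K ** (a *\<^sub>R A + \<gamma> *\<^sub>R outer_prod t t) ** transpose K
    = a *\<^sub>R A + (a * \<beta> * (2 + \<beta> * (u \<bullet> t)) + \<gamma> * (1 + \<beta> * (u \<bullet> t))\<^sup>2) *\<^sub>R outer_prod t t"
proof -
  define \<mu> where "\<mu> = a * \<beta> + \<gamma> * (1 + \<beta> * (u \<bullet> t))"
  have "K ** (a *\<^sub>R A + \<gamma> *\<^sub>R outer_prod t t) = a *\<^sub>R A + \<mu> *\<^sub>R outer_prod t t"
    by (simp add: K_def matrix_add_rdistrib matrix_add_ldistrib matrix_scalar_ac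
        scalar_matrix_assoc[symmetric] outer_prod_matrix_mul vector_matrix_mul_outer_prod
        vector_scaleR_matrix_ac outer_prod_scaleR_right assms)
      (simp add: \<mu>_def outer_prod_def vec_eq_iff algebra_simps)
  moreover have "transpose K = mat 1 + \<beta> *\<^sub>R outer_prod u t"
    by (simp add: K_def transpose_add transpose_scalar transpose_outer_prod)
  moreover have "(a *\<^sub>R A + \<mu> *\<^sub>R outer_prod t t) ** (mat 1 + \<beta> *\<^sub>R outer_prod u t)
      = a *\<^sub>R A + (a * \<beta> + \<mu> * (1 + \<beta> * (u \<bullet> t))) *\<^sub>R outer_prod t t"
    by (simp add: matrix_add_rdistrib matrix_add_ldistrib matrix_scalar_ac
        scalar_matrix_assoc[symmetric] matrix_mul_outer_prod outer_prod_matrix_vector_mul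
        matrix_vector_mult_add_rdistrib scaleR_matrix_vector_assoc[symmetric]
        outer_prod_scaleR_left assms)
      (simp add: outer_prod_def vec_eq_iff inner_commute algebra_simps)
  ultimately show ?thesis
    by (simp add: \<mu>_def power2_eq_square algebra_simps)
qed

lemma rank_one_congruence_collapse:
  fixes A :: "real^'n^'n" and h :: real
  assumes "A *v u = t" and "u v* A = t" and "u \<bullet> t \<noteq> 0"
  defines "K \<equiv> mat 1 + ((h - 1) / (u \<bullet> t)) *\<^sub>R outer_prod t u"
  shows "K ** (h\<^sup>2 *\<^sub>R A + ((1 - h\<^sup>2) / (u \<bullet> t)) *\<^sub>R outer_prod t t) ** transpose K = h\<^sup>2 *\<^sub>R A"
proof -
  have "h\<^sup>2 * ((h - 1) / (u \<bullet> t)) * (2 + (h - 1) / (u \<bullet> t) * (u \<bullet> t))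
      + (1 - h\<^sup>2) / (u \<bullet> t) * (1 + (h - 1) / (u \<bullet> t) * (u \<bullet> t))\<^sup>2 = 0"
    using assms(3) by (simp add: field_simps power2_eq_square)
  then show ?thesis
    unfolding K_def rank_one_congruence[OF assms(1,2)] by simp
qed

lemma invertible_if_positive_definite:
  fixes r :: "real^'n^'n"
  assumes "\<forall>x. x \<noteq> 0 \<longrightarrow> x \<bullet> (r *v x) > 0"
  shows "invertible r"
  unfolding invertible_left_inverse matrix_left_invertible_ker
  using assms by (metis inner_zero_right less_irrefl)

lemma matrix_inv_right: "invertible A \<Longrightarrow> A ** matrix_inv A = mat 1"
  and matrix_inv_left: "invertible A \<Longrightarrow> matrix_inv A ** A = mat 1"
  unfolding invertible_def matrix_inv_def by (metis (mono_tags, lifting) someI_ex)+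

lemma matrix_inv_symmetric_mult_vector:
  fixes r :: "real^'n^'n"
  assumes "transpose r = r" and "invertible r"
  shows "matrix_inv r *v (r *v t) = t" and "(r *v t) v* matrix_inv r = t"
proof -
  show "matrix_inv r *v (r *v t) = t"
    by (simp add: matrix_vector_mul_assoc matrix_inv_left assms(2))
  have "transpose (matrix_inv r) ** r = mat 1"
    by (metis assms matrix_transpose_mul matrix_inv_right transpose_mat)
  then show "(r *v t) v* matrix_inv r = t"
    by (metis transpose_matrix_vector matrix_vector_mul_assoc matrix_vector_mul_lid)
qed

lemma hval_pos: "\<bar>g\<bar> < 2 \<Longrightarrow> 0 < hval g"
  and hval_squared: "\<bar>g\<bar> < 2 \<Longrightarrow> (hval g)\<^sup>2 = 1 - g\<^sup>2 / 4"
  using power_strict_mono[of "\<bar>g\<bar>" 2 2] by (simp_all add: hval_def)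

lemma has_derivative_quadratic_form:
  fixes r :: "real^'n^'n"
  assumes "transpose r = r"
  shows "((\<lambda>x. x \<bullet> (r *v x)) has_derivative (\<lambda>v. 2 * ((r *v t) \<bullet> v))) (at t)"
proof -
  have "t \<bullet> (r *v v) = (r *v t) \<bullet> v" for v
    by (metis dot_lmul_matrix transpose_matrix_vector assms)
  then show ?thesis
    by (auto intro!: derivative_eq_intros
        bounded_linear.has_derivative[OF matrix_vector_mul_bounded_linear]
        simp: inner_commute)
qed

lemma has_derivative_xi:
  fixes r :: "real^'n^'n"
  assumes "transpose r = r" and "\<forall>x. x \<noteq> 0 \<longrightarrow> x \<bullet> (r *v x) > 0" and "t \<noteq> 0"
  shows "(xi r g has_derivative
    (\<lambda>v. xi r g t * ((hval g - 1) / (t \<bullet> (r *v t))) * ((r *v t) \<bullet> v))) (at t)"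
proof -
  let ?\<alpha> = "(hval g - 1) / 2"
  have "x \<bullet> (r *v x) \<ge> 0" for x
    using assms(2) by (cases "x = 0") (auto intro: less_imp_le)
  then have xi_powr: "xi r g = (\<lambda>x. (x \<bullet> (r *v x) / 2) powr ?\<alpha>)"
    by (simp add: xi_def Sfun_def fun_eq_iff)
  have half_form: "((\<lambda>x. x \<bullet> (r *v x) / 2) has_derivative (\<lambda>v. (r *v t) \<bullet> v)) (at t)"
    using has_derivative_divide[OF has_derivative_quadratic_form[OF assms(1)]
        has_derivative_const, of 2]
    by simp
  have pos: "t \<bullet> (r *v t) > 0"
    using assms(2,3) by simp
  show ?thesis
    unfolding xi_powr
    by (rule has_derivative_eq_rhs[OF has_derivative_powr[OF half_form has_derivative_const]])
      (use pos in \<open>auto simp: fun_eq_iff field_simps\<close>)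
qed

lemma jacobian_qe_map:
  fixes r :: "real^'n^'n"
  assumes "transpose r = r" and "\<forall>x. x \<noteq> 0 \<longrightarrow> x \<bullet> (r *v x) > 0" and "t \<noteq> 0"
  shows "jacobian (qe_map r g) (at t) = (xi r g t / hval g) *\<^sub>R
    (mat 1 + ((hval g - 1) / (t \<bullet> (r *v t))) *\<^sub>R outer_prod t (r *v t))"
proof -
  define c where "c = xi r g t / hval g"
  define \<beta> where "\<beta> = (hval g - 1) / (t \<bullet> (r *v t))"
  have deriv: "(qe_map r g has_derivative (\<lambda>v. c *\<^sub>R v + ((c * \<beta>) *\<^sub>R (r *v t) \<bullet> v) *\<^sub>R t)) (at t)"
    unfolding qe_map_def divide_inverse
    by (auto intro!: derivative_eq_intros has_derivative_xi[OF assms]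
        simp: c_def \<beta>_def fun_eq_iff divide_inverse algebra_simps)
  have "jacobian (qe_map r g) (at t) = c *\<^sub>R mat 1 + outer_prod t ((c * \<beta>) *\<^sub>R (r *v t))"
    unfolding jacobian_def frechet_derivative_at[OF deriv, symmetric]
    by (rule matrix_scaleR_plus_rank_one)
  then show ?thesis
    by (simp add: c_def \<beta>_def outer_prod_scaleR_right scaleR_add_right)
qed

lemma nup_eq_rank_one_update:
  assumes "t \<bullet> (r *v t) > 0"
  shows "nup r g t = (hval g)\<^sup>2 *\<^sub>R matrix_inv r + (g\<^sup>2 / 4 / (t \<bullet> (r *v t))) *\<^sub>R outer_prod t t"
  using assms by (simp add: nup_def outer_prod_def Sfun_def vec_eq_iff less_imp_le)

theorem theorem2p16:
  fixes r :: "real^'n^'n" and Nidx :: 'n and g :: real and t :: "real^'n"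
  assumes "CARD('n) \<ge> 2"
    and sym: "transpose r = r"
    and pos_def: "\<forall>x. x \<noteq> 0 \<longrightarrow> x \<bullet> (r *v x) > 0"
    and "r $ Nidx $ Nidx = 1"
    and "\<forall>a. a \<noteq> Nidx \<longrightarrow> r $ Nidx $ a = 0"
    and g_lower: "-2 < g" and g_upper: "g < 2"
    and t: "t \<noteq> 0"
  shows "jacobian (qe_map r g) (at t) ** nup r g t ** transpose (jacobian (qe_map r g) (at t))
         = (xi r g t)^2 *\<^sub>R matrix_inv r"
proof -
  define q where "q = t \<bullet> (r *v t)"
  define h where "h = hval g"
  define K where "K = mat 1 + ((h - 1) / q) *\<^sub>R outer_prod t (r *v t)"
  have q: "q > 0"
    using pos_def t by (simp add: q_def)
  have "\<bar>g\<bar> < 2"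
    using g_lower g_upper by simp
  then have h: "h > 0" "g\<^sup>2 / 4 = 1 - h\<^sup>2"
    by (simp_all add: h_def hval_pos hval_squared)
  have jacobian: "jacobian (qe_map r g) (at t) = (xi r g t / h) *\<^sub>R K"
    using jacobian_qe_map[OF sym pos_def t] by (simp add: K_def h_def q_def)
  have nup: "nup r g t = h\<^sup>2 *\<^sub>R matrix_inv r + ((1 - h\<^sup>2) / q) *\<^sub>R outer_prod t t"
    using nup_eq_rank_one_update[of t r g, folded q_def h_def, unfolded h(2)] q by simp
  have "jacobian (qe_map r g) (at t) ** nup r g t ** transpose (jacobian (qe_map r g) (at t))
      = (xi r g t / h)\<^sup>2 *\<^sub>R (K ** nup r g t ** transpose K)"
    by (simp add: jacobian matrix_scalar_ac scalar_matrix_assoc[symmetric] transpose_scalar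
        power2_eq_square)
  also have "\<dots> = (xi r g t / h)\<^sup>2 *\<^sub>R (h\<^sup>2 *\<^sub>R matrix_inv r)"
    using rank_one_congruence_collapse[where h = h, OF matrix_inv_symmetric_mult_vector
        [OF sym invertible_if_positive_definite[OF pos_def]]] q
    by (simp add: nup K_def q_def inner_commute)
  also have "\<dots> = (xi r g t)\<^sup>2 *\<^sub>R matrix_inv r"
    using h(1) by (simp add: power_divide)
  finally show ?thesis .
qed

end
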